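(* Let $D$ be a digraph and $(P,\mathrm{org})$ a valid DAG-depth decomposition of $D$ of depth $k$. Then every cop strategy based on $(P,\mathrm{org})$ is a winning strategy in the lift-free cops-and-robber game on $D$ that uses at most $k$ cops.
   Context: A DAG-depth decomposition of a digraph $D$ is a pair $(P,\mathrm{org})$ where $P$ is a directed acyclic graph and $\mathrm{org}:V(P)\to V(D)$ is surjective; $x'\in V(P)$ is called a copy of $\mathrm{org}(x')$. In $P$, roots are vertices of indegree $0$; $w'$ is a descendant of $v'$ if $P$ contains a directed path from $v'$ to $w'$. The depth of $P$ is the maximum number of vertices on a directed path in $P$. The decomposition is valid if for every $v'\in V(P)$ with $\mathrm{org}(v')=v$ and every $u\in N^+_D(v)$, either (1) there is $u'$ with $\mathrm{org}(u')=u$ that is a descendant of $v'$ in $P$, or (2) every directed path in $P$ from any root of $P$ to $v'$ contains a vertex $u'$ with $\mathrm{org}(u')=u$. Lift-free cops-and-robber game on $D$: the robber occupies a vertex, chosen at the start, and knows the cops' positions; the cop player knows the robber's position. In each turn the cop player announces a vertex where a new cop will be placed; before the cop lands the robber may move arbitrarily far along directed paths of $D$ avoiding vertices occupied by cops. Placed cops never move. The robber is caught when a cop is placed on his current vertex. A strategy based on $(P,\mathrm{org})$: each cop move is made "because of" a vertex $x'\in V(P)$, meaning the cop is placed on $\mathrm{org}(x')$ unless that vertex already holds a cop, in which case no new cop is placed. The sequence $x'_1,x'_2,\dots$ of vertices of $P$ must satisfy: (i) $x'_1$ is a root of $P$ and each $x'_{i+1}$ is an out-neighbor of $x'_i$ in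 $P$; (ii) among the candidates allowed by (i), the chosen one must have in $P$ a directed path to some copy of the robber's current position. *)

theory Defs
  imports Main
begin

definition dpath :: "'v set \<Rightarrow> ('v \<times> 'v) set \<Rightarrow> 'v list \<Rightarrow> bool" where
  "dpath V E ps \<longleftrightarrow> ps \<noteq> [] \<and> set ps \<subseteq> V \<and>
     (\<forall>i. Suc i < length ps \<longrightarrow> (ps ! i, ps ! Suc i) \<in> E)"

definition is_root :: "'v set \<Rightarrow> ('v \<times> 'v) set \<Rightarrow> 'v \<Rightarrow> bool" where
  "is_root VP EP x \<longleftrightarrow> x \<in> VP \<and> \<not> (\<exists>y. (y, x) \<in> EP)"

definition is_dag :: "'v set \<Rightarrow> ('v \<times> 'v) set \<Rightarrow> bool" where
  "is_dag VP EP \<longleftrightarrow> finite VP \<and> EP \<subseteq> VP \<times> VP \<and> acyclic EP"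

definition dag_depth :: "'v set \<Rightarrow> ('v \<times> 'v) set \<Rightarrow> nat" where
  "dag_depth VP EP = Max (length ` {ps. dpath VP EP ps})"

text \<open>Valid DAG-depth decomposition (P = (VP,EP), org) of D = (V,E).
  Descendant = reachable by a (possibly trivial) directed path.\<close>
definition valid_dag_decomp ::
  "'a set \<Rightarrow> ('a \<times> 'a) set \<Rightarrow> 'b set \<Rightarrow> ('b \<times> 'b) set \<Rightarrow> ('b \<Rightarrow> 'a) \<Rightarrow> bool" where
  "valid_dag_decomp V E VP EP org \<longleftrightarrow>
     is_dag VP EP \<and> org ` VP = V \<and>
     (\<forall>v'\<in>VP. \<forall>u. (org v', u) \<in> E \<longrightarrow>
        (\<exists>u'\<in>VP. org u' = u \<and> (v', u') \<in> EP\<^sup>*) \<or>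
        (\<forall>ps. dpath VP EP ps \<and> is_root VP EP (hd ps) \<and> last ps = v' \<longrightarrow>
              (\<exists>u'\<in>set ps. org u' = u)))"

definition robber_move :: "'a set \<Rightarrow> ('a \<times> 'a) set \<Rightarrow> 'a set \<Rightarrow> 'a \<Rightarrow> 'a \<Rightarrow> bool" where
  "robber_move V E C r r' \<longleftrightarrow>
     (\<exists>ps. dpath V E ps \<and> hd ps = r \<and> last ps = r' \<and> set ps \<inter> C = {})"

text \<open>A cop strategy maps a history (the P-vertices x'_1..x'_n chosen so far and the
  robber positions r_0..r_n, r_n being the current one) to the next P-vertex
  (None = the strategy cannot move).\<close>
type_synonym ('a, 'b) cop_strategy = "'b list \<Rightarrow> 'a list \<Rightarrow> 'b option"

definition allowed_next ::
  "'b set \<Rightarrow> ('b \<times> 'b) set \<Rightarrow> ('b \<Rightarrow> 'a) \<Rightarrow> 'b list \<Rightarrow> 'a \<Rightarrow> 'b \<Rightarrow> bool" where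
  "allowed_next VP EP org xs r x \<longleftrightarrow>
     x \<in> VP \<and> (if xs = [] then is_root VP EP x else (last xs, x) \<in> EP) \<and>
     (\<exists>y\<in>VP. org y = r \<and> (x, y) \<in> EP\<^sup>*)"

definition strategy_based_on ::
  "'b set \<Rightarrow> ('b \<times> 'b) set \<Rightarrow> ('b \<Rightarrow> 'a) \<Rightarrow> ('a, 'b) cop_strategy \<Rightarrow> bool" where
  "strategy_based_on VP EP org \<sigma> \<longleftrightarrow>
     (\<forall>xs rs. rs \<noteq> [] \<longrightarrow>
        (case \<sigma> xs rs of
           Some x \<Rightarrow> allowed_next VP EP org xs (last rs) x
         | None \<Rightarrow> \<not> (\<exists>x. allowed_next VP EP org xs (last rs) x)))"

text \<open>Round i: cop announces xs!i = sigma(previous choices, positions r_0..r_i);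
  robber moves r_i to r_(i+1) avoiding the cops already placed; the cop lands on
  org (xs!i).  The robber was not caught in any round before the last one.\<close>
definition consistent_history ::
  "'a set \<Rightarrow> ('a \<times> 'a) set \<Rightarrow> ('b \<Rightarrow> 'a) \<Rightarrow> ('a, 'b) cop_strategy \<Rightarrow> 'b list \<Rightarrow> 'a list \<Rightarrow> bool" where
  "consistent_history V E org \<sigma> xs rs \<longleftrightarrow>
     length rs = Suc (length xs) \<and> rs ! 0 \<in> V \<and>
     (\<forall>i < length xs.
        \<sigma> (take i xs) (take (Suc i) rs) = Some (xs ! i) \<and>
        robber_move V E (org ` set (take i xs)) (rs ! i) (rs ! Suc i)) \<and>
     (\<forall>i. Suc i < length xs \<longrightarrow> rs ! Suc i \<noteq> org (xs ! i))"

definition caught :: "('b \<Rightarrow> 'a) \<Rightarrow> 'b list \<Rightarrow> 'a list \<Rightarrow> bool" where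
  "caught org xs rs \<longleftrightarrow> xs \<noteq> [] \<and> last rs = org (last xs)"

text \<open>sigma is winning using at most k cops: it can always move while the robber is
  free, no play goes on forever, and at most k cops are ever placed.\<close>
definition winning_with_at_most ::
  "'a set \<Rightarrow> ('a \<times> 'a) set \<Rightarrow> ('b \<Rightarrow> 'a) \<Rightarrow> ('a, 'b) cop_strategy \<Rightarrow> nat \<Rightarrow> bool" where
  "winning_with_at_most V E org \<sigma> k \<longleftrightarrow>
     (\<forall>xs rs. consistent_history V E org \<sigma> xs rs \<and> \<not> caught org xs rs \<longrightarrow> \<sigma> xs rs \<noteq> None) \<and>
     \<not> (\<exists>X R. \<forall>n. consistent_history V E org \<sigma> (map X [0..<n]) (map R [0..<Suc n])) \<and>
     (\<forall>xs rs. consistent_history V E org \<sigma> xs rs \<longrightarrow> card (org ` set xs) \<le> k)"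

end

theory Submission
  imports Defs
begin

text \<open>The cops walk down a root path of the decomposition. The invariant is that after
  the cop of a vertex \<open>x'\<close> has been announced, the robber still stands on a vertex
  having a copy below \<open>x'\<close>: a robber step from a vertex copied below \<open>x'\<close> either leads
  to a vertex copied below the same copy, or, by validity, to a vertex copied on every
  root path through that copy, hence (extending the root path played so far) either
  below \<open>x'\<close> or on a vertex already occupied by a cop. So the strategy can always move
  until the robber is caught, each play is a directed path of \<open>P\<close>, hence finite, and at
  most as many cops are placed as the depth of \<open>P\<close>.\<close>

lemma dpath_rtrancl_nth:
  assumes "dpath V E ps" "i \<le> j" "j < length ps"
  shows "(ps ! i, ps ! j) \<in> E\<^sup>*"
  using assms(2,3)
proof (induction j)
  case (Suc j)
  show ?case
  proof (cases "i = Suc j")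
    case False
    with Suc have "(ps ! i, ps ! j) \<in> E\<^sup>*" by simp
    moreover have "(ps ! j, ps ! Suc j) \<in> E" using assms(1) Suc.prems unfolding dpath_def by blast
    ultimately show ?thesis by simp
  qed simp
qed simp

lemma dpath_trancl_nth:
  assumes "dpath V E ps" "i < j" "j < length ps"
  shows "(ps ! i, ps ! j) \<in> E\<^sup>+"
proof -
  have "(ps ! i, ps ! Suc i) \<in> E" using assms unfolding dpath_def by auto
  moreover have "(ps ! Suc i, ps ! j) \<in> E\<^sup>*" using dpath_rtrancl_nth[OF assms(1)] assms by auto
  ultimately show ?thesis by auto
qed

lemma dpath_distinct:
  assumes "dpath V E ps" "acyclic E"
  shows "distinct ps"
  unfolding distinct_conv_nth
proof (intro allI impI)
  have no_repeat: "ps ! i \<noteq> ps ! j" if "i < j" "j < length ps" for i j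
    using dpath_trancl_nth[OF assms(1) that] assms(2) unfolding acyclic_def by metis
  fix i j assume "i < length ps" "j < length ps" "i \<noteq> j"
  then show "ps ! i \<noteq> ps ! j" using no_repeat[of i j] no_repeat[of j i] by (metis linorder_neqE_nat)
qed

lemma dpath_length_le_card:
  assumes "dpath V E ps" "acyclic E" "finite V"
  shows "length ps \<le> card V"
proof -
  have "set ps \<subseteq> V" using assms(1) unfolding dpath_def by blast
  then show ?thesis using assms card_mono distinct_card dpath_distinct by metis
qed

lemma finite_dpath_lengths:
  assumes "acyclic E" "finite V"
  shows "finite (length ` {ps. dpath V E ps})"
proof (rule finite_subset)
  show "length ` {ps. dpath V E ps} \<subseteq> {..card V}" using dpath_length_le_card[OF _ assms] by auto
qed simp

lemma dpath_snoc:
  assumes "dpath V E xs" "(last xs, c) \<in> E" "c \<in> V"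
  shows "dpath V E (xs @ [c])"
  unfolding dpath_def
proof (intro conjI allI impI)
  show "xs @ [c] \<noteq> []" by simp
  show "set (xs @ [c]) \<subseteq> V" using assms unfolding dpath_def by auto
  fix i assume i: "Suc i < length (xs @ [c])"
  show "((xs @ [c]) ! i, (xs @ [c]) ! Suc i) \<in> E"
  proof (cases "Suc i < length xs")
    case True then show ?thesis using assms(1) unfolding dpath_def by (simp add: nth_append)
  next
    case False
    then have "Suc i = length xs" using i by simp
    moreover from this have "last xs = xs ! i" by (metis diff_Suc_1 last_conv_nth list.size(3) nat.distinct(1))
    ultimately show ?thesis using assms(2) by (simp add: nth_append)
  qed
qed

lemma dpath_append_rtrancl:
  assumes "(last pre, b) \<in> E\<^sup>*" "dpath V E pre" "E \<subseteq> V \<times> V"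
  shows "\<exists>qs. dpath V E (pre @ qs) \<and> last (pre @ qs) = b \<and> (\<forall>z\<in>set qs. (last pre, z) \<in> E\<^sup>*)"
  using assms(1)
proof (induction rule: rtrancl_induct)
  case base
  show ?case by (intro exI[of _ "[]"]) (simp add: assms(2))
next
  case (step b c)
  then obtain qs where qs: "dpath V E (pre @ qs)" "last (pre @ qs) = b" "\<forall>z\<in>set qs. (last pre, z) \<in> E\<^sup>*"
    by blast
  have "dpath V E ((pre @ qs) @ [c])" using dpath_snoc[OF qs(1)] qs(2) step assms(3) by blast
  then show ?case using qs step by (intro exI[of _ "qs @ [c]"]) auto
qed

lemma dpath_last_invariant:
  assumes "dpath V E ps" "Q (hd ps)"
    and step: "\<And>u w. (u, w) \<in> E \<Longrightarrow> w \<in> set ps \<Longrightarrow> Q u \<Longrightarrow> Q w"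
  shows "Q (last ps)"
proof -
  have "Q (ps ! j)" if "j < length ps" for j
    using that
  proof (induction j)
    case 0
    then show ?case using assms(1,2) unfolding dpath_def by (simp add: hd_conv_nth)
  next
    case (Suc j)
    then show ?case using step[of "ps ! j" "ps ! Suc j"] assms(1) unfolding dpath_def by simp
  qed
  then show ?thesis using assms(1) unfolding dpath_def by (simp add: last_conv_nth)
qed

lemma is_dag_root_ancestor:
  assumes "is_dag VP EP" "y \<in> VP"
  shows "\<exists>x. is_root VP EP x \<and> (x, y) \<in> EP\<^sup>*"
proof -
  have "finite EP" using assms(1) unfolding is_dag_def by (meson finite_SigmaI finite_subset)
  then have "wf EP" using finite_acyclic_wf assms(1) unfolding is_dag_def by blast
  then obtain z where z: "(z, y) \<in> EP\<^sup>*" "\<And>w. (w, z) \<in> EP \<Longrightarrow> (w, y) \<notin> EP\<^sup>*"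
    by (rule wfE_min[of EP y "{z. (z, y) \<in> EP\<^sup>*}"]) auto
  have "z \<in> VP"
    using z(1) assms by (cases rule: converse_rtranclE) (auto simp: is_dag_def)
  moreover have "\<nexists>w. (w, z) \<in> EP"
    using z by (meson converse_rtrancl_into_rtrancl)
  ultimately show ?thesis using z(1) unfolding is_root_def by blast
qed

lemma is_dag_no_infinite_chain:
  assumes "is_dag VP EP"
  shows "\<nexists>X. \<forall>j. (X j, X (Suc j)) \<in> EP"
proof -
  have "finite EP" using assms unfolding is_dag_def by (meson finite_SigmaI finite_subset)
  then have "wf (EP\<inverse>)" using finite_acyclic_wf_converse assms unfolding is_dag_def by blast
  then show ?thesis using wf_no_infinite_down_chainE by (metis converse_iff)
qed

text \<open>Here \<open>pre\<close> is the root path of announced vertices, the last one being \<open>x'\<close>;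
  the cops placed so far stand on the originals of \<open>butlast pre\<close>.\<close>

lemma valid_dag_decomp_step_below:
  assumes valid: "valid_dag_decomp V E VP EP org"
    and pre: "dpath VP EP pre" "is_root VP EP (hd pre)"
    and c: "c \<in> VP" "(last pre, c) \<in> EP\<^sup>*"
    and edge: "(org c, w) \<in> E" and free: "w \<notin> org ` set (butlast pre)"
  shows "\<exists>c'\<in>VP. org c' = w \<and> (last pre, c') \<in> EP\<^sup>*"
proof -
  have EP: "EP \<subseteq> VP \<times> VP" using valid unfolding valid_dag_decomp_def is_dag_def by blast
  consider (below) "\<exists>c'\<in>VP. org c' = w \<and> (c, c') \<in> EP\<^sup>*"
    | (on_root_paths) "\<forall>ps. dpath VP EP ps \<and> is_root VP EP (hd ps) \<and> last ps = c \<longrightarrow> (\<exists>u'\<in>set ps. org u' = w)"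
    using valid c(1) edge unfolding valid_dag_decomp_def by blast
  then show ?thesis
  proof cases
    case below
    then show ?thesis using c(2) by (meson rtrancl_trans)
  next
    case on_root_paths
    obtain qs where qs: "dpath VP EP (pre @ qs)" "last (pre @ qs) = c" "\<forall>z\<in>set qs. (last pre, z) \<in> EP\<^sup>*"
      using dpath_append_rtrancl[OF c(2) pre(1) EP] by blast
    have "hd (pre @ qs) = hd pre" using pre(1) unfolding dpath_def by simp
    then obtain u' where u': "u' \<in> set (pre @ qs)" "org u' = w" using on_root_paths qs(1,2) pre(2) by metis
    have "set pre \<subseteq> insert (last pre) (set (butlast pre))" by (induction pre rule: rev_induct) auto
    then have "u' \<in> set qs \<or> u' = last pre" using u' free by auto
    then have "(last pre, u') \<in> EP\<^sup>*" using qs(3) by blast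
    moreover have "u' \<in> VP" using qs(1) u'(1) unfolding dpath_def by blast
    ultimately show ?thesis using u'(2) by blast
  qed
qed

lemma valid_dag_decomp_robber_move_below:
  assumes valid: "valid_dag_decomp V E VP EP org"
    and pre: "dpath VP EP pre" "is_root VP EP (hd pre)"
    and move: "robber_move V E (org ` set (butlast pre)) r r'"
    and r: "\<exists>c\<in>VP. org c = r \<and> (last pre, c) \<in> EP\<^sup>*"
  shows "\<exists>c\<in>VP. org c = r' \<and> (last pre, c) \<in> EP\<^sup>*"
proof -
  obtain ps where ps: "dpath V E ps" "hd ps = r" "last ps = r'" "set ps \<inter> org ` set (butlast pre) = {}"
    using move unfolding robber_move_def by blast
  have "\<exists>c\<in>VP. org c = last ps \<and> (last pre, c) \<in> EP\<^sup>*"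
  proof (rule dpath_last_invariant[OF ps(1)])
    fix u w assume "(u, w) \<in> E" "w \<in> set ps" "\<exists>c\<in>VP. org c = u \<and> (last pre, c) \<in> EP\<^sup>*"
    then show "\<exists>c\<in>VP. org c = w \<and> (last pre, c) \<in> EP\<^sup>*"
      using valid_dag_decomp_step_below[OF valid pre] ps(4) by blast
  qed (use r ps(2) in simp)
  then show ?thesis using ps(3) by simp
qed

lemma history_allowed_next:
  assumes "consistent_history V E org \<sigma> xs rs" "i < length xs" "strategy_based_on VP EP org \<sigma>"
  shows "allowed_next VP EP org (take i xs) (rs ! i) (xs ! i)"
proof -
  have len: "length rs = Suc (length xs)" and
    move: "\<sigma> (take i xs) (take (Suc i) rs) = Some (xs ! i)"
    using assms(1,2) unfolding consistent_history_def by blast+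
  have "take (Suc i) rs \<noteq> []" "last (take (Suc i) rs) = rs ! i"
    using len assms(2) by (auto simp: take_Suc_conv_app_nth)
  then show ?thesis using assms(3) move unfolding strategy_based_on_def by (metis option.simps(5))
qed

lemma history_root_path:
  assumes "consistent_history V E org \<sigma> xs rs" "0 < n" "n \<le> length xs" "strategy_based_on VP EP org \<sigma>"
  shows "dpath VP EP (take n xs)" "is_root VP EP (hd (take n xs))"
proof -
  have allowed: "\<And>i. i < length xs \<Longrightarrow> allowed_next VP EP org (take i xs) (rs ! i) (xs ! i)"
    using history_allowed_next[OF assms(1) _ assms(4)] .
  show "dpath VP EP (take n xs)" unfolding dpath_def
  proof (intro conjI allI impI)
    show "take n xs \<noteq> []" "set (take n xs) \<subseteq> VP"
      using assms(2,3) allowed unfolding allowed_next_def by (auto simp: in_set_conv_nth)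
    fix j assume j: "Suc j < length (take n xs)"
    then have "take (Suc j) xs \<noteq> []" "last (take (Suc j) xs) = xs ! j"
      by (auto simp: take_Suc_conv_app_nth)
    then show "(take n xs ! j, take n xs ! Suc j) \<in> EP"
      using allowed[of "Suc j"] j unfolding allowed_next_def by auto
  qed
  show "is_root VP EP (hd (take n xs))"
    using allowed[of 0] assms(2,3) unfolding allowed_next_def by (cases xs) auto
qed

lemma history_robber_below:
  assumes valid: "valid_dag_decomp V E VP EP org"
    and H: "consistent_history V E org \<sigma> xs rs" and i: "i < length xs"
    and S: "strategy_based_on VP EP org \<sigma>"
  shows "\<exists>c\<in>VP. org c = rs ! Suc i \<and> (xs ! i, c) \<in> EP\<^sup>*"
proof -
  let ?pre = "take (Suc i) xs"
  have last_pre: "last ?pre = xs ! i" and butlast_pre: "butlast ?pre = take i xs"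
    using i by (simp_all add: take_Suc_conv_app_nth)
  have "robber_move V E (org ` set (butlast ?pre)) (rs ! i) (rs ! Suc i)"
    using H i butlast_pre unfolding consistent_history_def by simp
  moreover have "\<exists>c\<in>VP. org c = rs ! i \<and> (last ?pre, c) \<in> EP\<^sup>*"
    using history_allowed_next[OF H i S] last_pre unfolding allowed_next_def by simp
  ultimately show ?thesis
    using valid_dag_decomp_robber_move_below[OF valid history_root_path[OF H _ _ S, of "Suc i"]] i last_pre
    by simp
qed

lemma based_strategy_moves_until_caught:
  assumes valid: "valid_dag_decomp V E VP EP org" and S: "strategy_based_on VP EP org \<sigma>"
    and H: "consistent_history V E org \<sigma> xs rs" and free: "\<not> caught org xs rs"
  shows "\<sigma> xs rs \<noteq> None"
proof
  assume none: "\<sigma> xs rs = None"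
  have dag: "is_dag VP EP" and surj: "org ` VP = V" and EP: "EP \<subseteq> VP \<times> VP"
    using valid unfolding valid_dag_decomp_def is_dag_def by blast+
  have len: "length rs = Suc (length xs)" using H unfolding consistent_history_def by blast
  then have rs: "rs \<noteq> []" by auto
  then have stuck: "\<nexists>x. allowed_next VP EP org xs (last rs) x"
    using S none unfolding strategy_based_on_def by (metis option.simps(4))
  show False
  proof (cases "xs = []")
    case True
    then have "last rs \<in> V" using H len unfolding consistent_history_def by (cases rs) auto
    then obtain y where y: "y \<in> VP" "org y = last rs" using surj by auto
    obtain x where "is_root VP EP x" "(x, y) \<in> EP\<^sup>*" using is_dag_root_ancestor[OF dag y(1)] by blast
    then have "allowed_next VP EP org xs (last rs) x" using True y unfolding allowed_next_def is_root_def by auto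
    with stuck show False by blast
  next
    case False
    define i where "i = length xs - 1"
    have i: "i < length xs" and last_rs: "last rs = rs ! Suc i" and last_xs: "last xs = xs ! i"
      using False len rs by (simp_all add: i_def last_conv_nth)
    obtain c where c: "c \<in> VP" "org c = last rs" "(last xs, c) \<in> EP\<^sup>*"
      using history_robber_below[OF valid H i S] last_rs last_xs by auto
    have "c \<noteq> last xs" using free False c(2) unfolding caught_def by auto
    then obtain x where "(last xs, x) \<in> EP" "(x, c) \<in> EP\<^sup>*" using c(3) by (auto elim: converse_rtranclE)
    then have "allowed_next VP EP org xs (last rs) x" using False EP c unfolding allowed_next_def by auto
    with stuck show False by blast
  qed
qed

lemma based_strategy_no_infinite_play:
  assumes dag: "is_dag VP EP" and S: "strategy_based_on VP EP org \<sigma>"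
  shows "\<nexists>X R. \<forall>n. consistent_history V E org \<sigma> (map X [0..<n]) (map R [0..<Suc n])"
proof
  assume "\<exists>X R. \<forall>n. consistent_history V E org \<sigma> (map X [0..<n]) (map R [0..<Suc n])"
  then obtain X R where H: "\<And>n. consistent_history V E org \<sigma> (map X [0..<n]) (map R [0..<Suc n])"
    by blast
  have "(X j, X (Suc j)) \<in> EP" for j
  proof -
    have "dpath VP EP (take (Suc (Suc j)) (map X [0..<Suc (Suc j)]))"
      by (rule history_root_path(1)[OF H _ _ S]) simp_all
    then show ?thesis unfolding dpath_def by (auto simp del: upt_Suc simp add: nth_append)
  qed
  then show False using is_dag_no_infinite_chain[OF dag] by blast
qed

lemma based_strategy_cops_le_depth:
  assumes dag: "is_dag VP EP" and S: "strategy_based_on VP EP org \<sigma>"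
    and H: "consistent_history V E org \<sigma> xs rs"
  shows "card (org ` set xs) \<le> dag_depth VP EP"
proof (cases "xs = []")
  case False
  have "dpath VP EP xs" using history_root_path(1)[OF H _ _ S, of "length xs"] False by simp
  moreover have "finite (length ` {ps. dpath VP EP ps})"
    using dag finite_dpath_lengths unfolding is_dag_def by blast
  ultimately have "length xs \<le> dag_depth VP EP" unfolding dag_depth_def by (auto intro: Max_ge)
  moreover have "card (org ` set xs) \<le> length xs" using card_image_le card_length le_trans by blast
  ultimately show ?thesis by linarith
qed simp

theorem theorem3p3:
  fixes V :: "'a set" and E :: "('a \<times> 'a) set"
    and VP :: "'b set" and EP :: "('b \<times> 'b) set" and org :: "'b \<Rightarrow> 'a"
    and k :: nat and \<sigma> :: "('a, 'b) cop_strategy"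
  assumes "finite V" and "E \<subseteq> V \<times> V"
    and "valid_dag_decomp V E VP EP org"
    and "dag_depth VP EP = k"
    and "strategy_based_on VP EP org \<sigma>"
  shows "winning_with_at_most V E org \<sigma> k"
proof -
  have dag: "is_dag VP EP" using assms(3) unfolding valid_dag_decomp_def by blast
  show ?thesis
    unfolding winning_with_at_most_def
    using based_strategy_moves_until_caught[OF assms(3,5)]
      based_strategy_no_infinite_play[OF dag assms(5)]
      based_strategy_cops_le_depth[OF dag assms(5)] assms(4)
    by blast
qed

end
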